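(* Let $H$ be a finite simple graph on $n$ vertices, and let $KH_1,KH_2,\ldots,KH_s$ be the replication cliques of $H$ (in some chosen order), of sizes $y_1,\ldots,y_s\ge 1$. For $i=1,\ldots,s$ let $n_i$ denote the number of non-edges between a (any) vertex of $KH_i$ and the vertices of $KH_1\cup\cdots\cup KH_{i-1}$. Then $$\rho(H) \leq n+ \sum_{i=1}^s n_i.$$ Moreover, among all orderings of the replication cliques, the right-hand side is smallest when the ordering satisfies $y_1 \le y_2 \le \cdots \le y_s$.
   Context: All graphs are finite and simple. A coloring means a proper vertex coloring; an induced subgraph is rainbow if all its vertices have pairwise different colors. For a graph $H$, $\rho(H)$ is the least number $m$ such that there exists a graph $G$ on $m$ vertices such that every proper vertex coloring of $G$ contains a rainbow induced subgraph isomorphic to $H$. On $V(H)$ define $x\sim y$ iff $x=y$, or $xy$ is an edge of $H$ and $x,y$ have exactly the same neighbors in $H-\{x,y\}$; this is an equivalence relation whose classes are cliques, called the replication cliques of $H$. Since vertices in one replication clique have the same neighbors outside it, $n_i$ does not depend on the choice of vertex in $KH_i$. A non-edge is a pair of distinct non-adjacent vertices. *)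

theory Defs
  imports Main
begin

definition simple_graph :: "'a set \<Rightarrow> ('a \<Rightarrow> 'a \<Rightarrow> bool) \<Rightarrow> bool" where
  "simple_graph V E \<longleftrightarrow> finite V \<and> (\<forall>x y. E x y \<longrightarrow> x \<in> V \<and> y \<in> V)
     \<and> (\<forall>x y. E x y \<longrightarrow> E y x) \<and> (\<forall>x. \<not> E x x)"

definition proper_coloring :: "'b set \<Rightarrow> ('b \<Rightarrow> 'b \<Rightarrow> bool) \<Rightarrow> ('b \<Rightarrow> nat) \<Rightarrow> bool" where
  "proper_coloring VG EG c \<longleftrightarrow> (\<forall>x\<in>VG. \<forall>y\<in>VG. EG x y \<longrightarrow> c x \<noteq> c y)"

definition has_rainbow_induced_copy ::
  "'a set \<Rightarrow> ('a \<Rightarrow> 'a \<Rightarrow> bool) \<Rightarrow> 'b set \<Rightarrow> ('b \<Rightarrow> 'b \<Rightarrow> bool) \<Rightarrow> ('b \<Rightarrow> nat) \<Rightarrow> bool" where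
  "has_rainbow_induced_copy V E VG EG c \<longleftrightarrow>
     (\<exists>f. inj_on f V \<and> f ` V \<subseteq> VG \<and> (\<forall>x\<in>V. \<forall>y\<in>V. EG (f x) (f y) \<longleftrightarrow> E x y)
          \<and> inj_on (c \<circ> f) V)"

text \<open>rho(H): least m such that some graph G on m vertices (w.l.o.g. vertex set {0..<m})
  has the property that every proper colouring contains a rainbow induced copy of H.\<close>
definition rho :: "'a set \<Rightarrow> ('a \<Rightarrow> 'a \<Rightarrow> bool) \<Rightarrow> nat" where
  "rho V E = (LEAST m. \<exists>EG :: nat \<Rightarrow> nat \<Rightarrow> bool. simple_graph {..<m} EG \<and>
      (\<forall>c. proper_coloring {..<m} EG c \<longrightarrow> has_rainbow_induced_copy V E {..<m} EG c))"

definition repl :: "'a set \<Rightarrow> ('a \<Rightarrow> 'a \<Rightarrow> bool) \<Rightarrow> 'a \<Rightarrow> 'a \<Rightarrow> bool" where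
  "repl V E x y \<longleftrightarrow> x = y \<or> (E x y \<and> (\<forall>z\<in>V - {x, y}. E x z \<longleftrightarrow> E y z))"

definition repl_cliques :: "'a set \<Rightarrow> ('a \<Rightarrow> 'a \<Rightarrow> bool) \<Rightarrow> 'a set set" where
  "repl_cliques V E = {{y \<in> V. repl V E x y} | x. x \<in> V}"

text \<open>An ordering KH_1,...,KH_s of the replication cliques (list index i = KH_(i+1)).\<close>
definition repl_ordering :: "'a set \<Rightarrow> ('a \<Rightarrow> 'a \<Rightarrow> bool) \<Rightarrow> 'a set list \<Rightarrow> bool" where
  "repl_ordering V E Ks \<longleftrightarrow> distinct Ks \<and> set Ks = repl_cliques V E"

text \<open>n_i: number of non-edges between a vertex of Ks!i and the vertices of the
  earlier cliques (independent of the chosen vertex; we pick one via SOME).\<close>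
definition nonedges_before :: "('a \<Rightarrow> 'a \<Rightarrow> bool) \<Rightarrow> 'a set list \<Rightarrow> nat \<Rightarrow> nat" where
  "nonedges_before E Ks i =
     card {z \<in> \<Union> (set (take i Ks)). z \<noteq> (SOME v. v \<in> Ks ! i) \<and> \<not> E (SOME v. v \<in> Ks ! i) z}"

definition total_nonedges :: "('a \<Rightarrow> 'a \<Rightarrow> bool) \<Rightarrow> 'a set list \<Rightarrow> nat" where
  "total_nonedges E Ks = (\<Sum>i<length Ks. nonedges_before E Ks i)"

end

theory Submission
  imports Defs
begin

text \<open>
  The graph witnessing the bound is a clique blow-up of \<open>H\<close>: every vertex \<open>v\<close> is replaced by a
  clique of \<open>w v\<close> copies, where \<open>w\<close> is \<open>1\<close> except at the chosen vertex of \<open>KH\<^sub>i\<close>, which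
  gets \<open>1 + n\<^sub>i\<close> copies; so it has \<open>n + \<Sum> n\<^sub>i\<close> vertices. Given a proper colouring, embed
  \<open>KH\<^sub>1, \<dots>, KH\<^sub>s\<close> greedily, each vertex into copies of vertices of its own replication
  clique. The copies over \<open>KH\<^sub>i\<close> form a clique, hence carry at least \<open>y\<^sub>i + n\<^sub>i\<close> distinct
  colours, and at most \<open>n\<^sub>i\<close> of them are taken by earlier vertices not adjacent to \<open>KH\<^sub>i\<close>;
  earlier vertices adjacent to \<open>KH\<^sub>i\<close> are adjacent to all those copies and cannot share a
  colour with them. Since vertices of one replication clique have the same neighbours outside
  it, the resulting copy is induced.

  For the second claim, two distinct replication cliques are either completely joined or
  completely non-adjacent, and a non-adjacent pair contributes to \<open>\<Sum> n\<^sub>i\<close> the size of the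
  clique that comes first. This is at least the smaller of the two sizes, with equality for
  all pairs at once when the sizes increase along the ordering.
\<close>

lemma Union_set_take:
  "k \<le> length L \<Longrightarrow> \<Union>(set (take k L)) = (\<Union>j<k. L ! j)"
  by (simp add: nth_image[symmetric] atLeast0LessThan)

lemma sum_lower_triangle_sym:
  fixes g :: "'b \<Rightarrow> 'b \<Rightarrow> 'c::comm_monoid_add"
  assumes L: "distinct L" and sym: "\<And>A B. g A B = g B A"
  defines "T \<equiv> \<Sum>j<length L. \<Sum>i<j. g (L ! i) (L ! j)"
  shows "T + T + (\<Sum>A\<in>set L. g A A) = (\<Sum>A\<in>set L. \<Sum>B\<in>set L. g A B)"
proof -
  let ?n = "length L"
  have upper: "(\<Sum>j<?n. \<Sum>i\<in>{Suc j..<?n}. g (L ! i) (L ! j)) = T"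
  proof -
    have "(\<Sum>j<?n. \<Sum>i\<in>{Suc j..<?n}. g (L ! i) (L ! j))
        = (\<Sum>j<?n. \<Sum>i\<in>{i \<in> {..<?n}. j < i}. g (L ! i) (L ! j))"
      by (intro sum.cong) auto
    also have "\<dots> = (\<Sum>i<?n. \<Sum>j\<in>{j \<in> {..<?n}. j < i}. g (L ! i) (L ! j))"
      by (rule sum.swap_restrict) simp_all
    also have "\<dots> = T"
      unfolding T_def using sym by (intro sum.cong) auto
    finally show ?thesis .
  qed
  have row: "(\<Sum>i<?n. g (L ! i) (L ! j))
      = (\<Sum>i<j. g (L ! i) (L ! j)) + g (L ! j) (L ! j) + (\<Sum>i\<in>{Suc j..<?n}. g (L ! i) (L ! j))"
    if "j < ?n" for j
    using that sum.atLeastLessThan_concat[of 0 j ?n "\<lambda>i. g (L ! i) (L ! j)"]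
      sum.atLeast_Suc_lessThan[of j ?n "\<lambda>i. g (L ! i) (L ! j)"]
    by (simp add: atLeast0LessThan add.assoc)
  have reindex: "sum h (set L) = (\<Sum>j<?n. h (L ! j))" for h :: "'b \<Rightarrow> 'c"
    by (rule sum.reindex_bij_betw[OF bij_betw_nth[OF L refl refl], symmetric])
  have "(\<Sum>A\<in>set L. \<Sum>B\<in>set L. g A B) = (\<Sum>j<?n. \<Sum>i<?n. g (L ! i) (L ! j))"
    by (simp only: reindex) (rule sum.swap)
  also have "\<dots> = T + (\<Sum>j<?n. g (L ! j) (L ! j)) + T"
    by (simp add: row sum.distrib T_def upper)
  also have "(\<Sum>j<?n. g (L ! j) (L ! j)) = (\<Sum>A\<in>set L. g A A)"
    by (rule reindex[symmetric])
  finally show ?thesis by (simp add: ac_simps)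
qed

section \<open>Colourings and rainbow copies\<close>

lemma card_le_inj_avoiding:
  assumes B: "finite B" "inj_on c B" and K: "finite K" and F: "finite F"
    and card: "card K + card F \<le> card B"
  obtains g where "inj_on g K" and "g ` K \<subseteq> {p \<in> B. c p \<notin> F}"
proof -
  let ?hit = "{p \<in> B. c p \<in> F}" and ?free = "{p \<in> B. c p \<notin> F}"
  have "?free = B - ?hit"
    by blast
  then have "card ?free = card B - card ?hit"
    using B(1) by (simp add: card_Diff_subset)
  moreover have "card ?hit \<le> card F"
    by (rule card_inj_on_le[OF inj_on_subset[OF B(2)] _ F]) auto
  ultimately have "card K \<le> card ?free"
    using card by linarith
  moreover have "finite ?free"
    using B(1) by simp
  ultimately show ?thesis
    using card_le_inj[OF K] that by blast
qed

lemma proper_coloring_inj_on_clique: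
  assumes "proper_coloring VG EG c" and "S \<subseteq> VG"
    and "\<And>p q. p \<in> S \<Longrightarrow> q \<in> S \<Longrightarrow> p \<noteq> q \<Longrightarrow> EG p q"
  shows "inj_on c S"
  using assms unfolding proper_coloring_def inj_on_def by blast

lemma has_rainbow_induced_copy_embedding:
  assumes h: "inj_on h W" "h ` W \<subseteq> VG" "\<And>p q. p \<in> W \<Longrightarrow> q \<in> W \<Longrightarrow> EG (h p) (h q) = EW p q"
    and copy: "has_rainbow_induced_copy V E W EW (c \<circ> h)"
  shows "has_rainbow_induced_copy V E VG EG c"
proof -
  obtain f where f: "inj_on f V" "f ` V \<subseteq> W" "\<forall>x\<in>V. \<forall>y\<in>V. EW (f x) (f y) \<longleftrightarrow> E x y"
    and rainbow: "inj_on (c \<circ> h \<circ> f) V"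
    using copy unfolding has_rainbow_induced_copy_def by blast
  have "inj_on (h \<circ> f) V"
    using f(1) inj_on_subset[OF h(1) f(2)] by (rule comp_inj_on)
  moreover have "(h \<circ> f) ` V \<subseteq> VG"
    using f(2) h(2) by auto
  moreover have "\<forall>x\<in>V. \<forall>y\<in>V. EG ((h \<circ> f) x) ((h \<circ> f) y) \<longleftrightarrow> E x y"
    using f(2,3) h(3) by (simp add: image_subset_iff)
  moreover have "inj_on (c \<circ> (h \<circ> f)) V"
    using rainbow by (simp add: comp_assoc)
  ultimately show ?thesis
    unfolding has_rainbow_induced_copy_def by blast
qed

lemma rho_le_card:
  fixes W :: "'b set" and EW :: "'b \<Rightarrow> 'b \<Rightarrow> bool"
  assumes W: "finite W" and sym: "\<And>p q. EW p q \<Longrightarrow> EW q p" and irrefl: "\<And>p. \<not> EW p p"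
    and rainbow: "\<And>c. proper_coloring W EW c \<Longrightarrow> has_rainbow_induced_copy V E W EW c"
  shows "rho V E \<le> card W"
proof -
  let ?m = "card W"
  obtain h where "bij_betw h W {0..<?m}"
    using ex_bij_betw_finite_nat[OF W] by blast
  then have h: "bij_betw h W {..<?m}"
    by (simp add: atLeast0LessThan)
  define EG where "EG i j \<longleftrightarrow> i < ?m \<and> j < ?m \<and> EW (inv_into W h i) (inv_into W h j)" for i j
  have h_in: "h p \<in> {..<?m}" if "p \<in> W" for p
    using bij_betw_apply[OF h that] .
  have EG_h: "EG (h p) (h q) = EW p q" if "p \<in> W" "q \<in> W" for p q
    using h_in[OF that(1)] h_in[OF that(2)] bij_betw_inv_into_left[OF h that(1)]
      bij_betw_inv_into_left[OF h that(2)]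
    unfolding EG_def by simp
  have "simple_graph {..<?m} EG"
    unfolding simple_graph_def EG_def using sym irrefl by blast
  moreover have "has_rainbow_induced_copy V E {..<?m} EG c" if c: "proper_coloring {..<?m} EG c" for c
  proof (rule has_rainbow_induced_copy_embedding)
    show "inj_on h W" "h ` W \<subseteq> {..<?m}"
      using h by (auto simp: bij_betw_def)
    show "EG (h p) (h q) = EW p q" if "p \<in> W" "q \<in> W" for p q
      using EG_h[OF that] .
    have "proper_coloring W EW (c \<circ> h)"
      unfolding proper_coloring_def
    proof (intro ballI impI)
      fix p q assume "p \<in> W" "q \<in> W" "EW p q"
      then show "(c \<circ> h) p \<noteq> (c \<circ> h) q"
        using c h_in EG_h unfolding proper_coloring_def by simp
    qed
    then show "has_rainbow_induced_copy V E W EW (c \<circ> h)"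
      by (rule rainbow)
  qed
  ultimately show ?thesis
    unfolding rho_def by (intro Least_le) blast
qed

section \<open>Clique blow-ups\<close>

definition blowup :: "'a set \<Rightarrow> ('a \<Rightarrow> nat) \<Rightarrow> ('a \<times> nat) set" where
  "blowup V w = Sigma V (\<lambda>v. {..<w v})"

definition blowup_edge :: "('a \<Rightarrow> 'a \<Rightarrow> bool) \<Rightarrow> 'a \<times> nat \<Rightarrow> 'a \<times> nat \<Rightarrow> bool" where
  "blowup_edge E p q \<longleftrightarrow> E (fst p) (fst q) \<or> (fst p = fst q \<and> snd p \<noteq> snd q)"

lemma finite_blowup: "finite V \<Longrightarrow> finite (blowup V w)"
  unfolding blowup_def by simp

lemma card_blowup: "finite V \<Longrightarrow> card (blowup V w) = (\<Sum>v\<in>V. w v)"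
  unfolding blowup_def by (simp add: card_SigmaI)

lemma blowup_mono: "K \<subseteq> V \<Longrightarrow> blowup K w \<subseteq> blowup V w"
  unfolding blowup_def by auto

definition admissible_weight :: "('a \<Rightarrow> 'a \<Rightarrow> bool) \<Rightarrow> 'a set list \<Rightarrow> ('a \<Rightarrow> nat) \<Rightarrow> bool" where
  "admissible_weight E Ks w \<longleftrightarrow>
     (\<forall>k<length Ks. card (Ks ! k) + nonedges_before E Ks k \<le> (\<Sum>u\<in>Ks ! k. w u))"

section \<open>Replication cliques\<close>

abbreviation rep :: "'a set \<Rightarrow> 'a" where
  "rep K \<equiv> SOME v. v \<in> K"

text \<open>For distinct replication cliques \<open>A\<close> and \<open>B\<close>, the number of non-edges between any
  vertex of \<open>B\<close> and the clique \<open>A\<close>.\<close>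

definition cross_nonedges :: "('a \<Rightarrow> 'a \<Rightarrow> bool) \<Rightarrow> 'a set \<Rightarrow> 'a set \<Rightarrow> nat" where
  "cross_nonedges E A B = (if E (rep B) (rep A) then 0 else card A)"

locale sgraph =
  fixes V :: "'a set" and E :: "'a \<Rightarrow> 'a \<Rightarrow> bool"
  assumes simple: "simple_graph V E"
begin

lemma finite_V: "finite V"
  and edge_sym: "E x y \<Longrightarrow> E y x"
  and edge_irrefl: "\<not> E x x"
  and edge_in_V: "E x y \<Longrightarrow> x \<in> V" "E x y \<Longrightarrow> y \<in> V"
  using simple unfolding simple_graph_def by blast+

lemma repl_sym: "repl V E x y \<Longrightarrow> repl V E y x"
  unfolding repl_def by (metis edge_sym insert_commute)

lemma repl_trans:
  assumes xy: "repl V E x y" and yz: "repl V E y z"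
  shows "repl V E x z"
proof (cases "x = y \<or> y = z \<or> x = z")
  case True
  with xy yz show ?thesis unfolding repl_def by auto
next
  case False
  with xy yz have "E x y" "E y z"
    and x_y: "\<forall>w\<in>V - {x, y}. E x w = E y w" and y_z: "\<forall>w\<in>V - {y, z}. E y w = E z w"
    unfolding repl_def by auto
  with False edge_in_V have "E x z" by blast
  moreover have "E x w = E z w" if "w \<in> V - {x, z}" for w
  proof (cases "w = y")
    case True
    then show ?thesis using \<open>E x y\<close> \<open>E y z\<close> edge_sym by blast
  next
    case False
    with that x_y y_z show ?thesis by blast
  qed
  ultimately show ?thesis unfolding repl_def by blast
qed

lemma repl_edge: "repl V E x y \<Longrightarrow> x \<noteq> y \<Longrightarrow> E x y"
  unfolding repl_def by blast

lemma edge_repl_cong_left: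
  assumes "repl V E x x'" and "\<not> repl V E x y"
  shows "E x y = E x' y"
proof (cases "x = x'")
  case False
  have "y \<noteq> x" "y \<noteq> x'"
    using assms repl_sym unfolding repl_def by blast+
  then show ?thesis
    using assms(1) False edge_in_V(2) unfolding repl_def by blast
qed simp

lemma edge_repl_cong:
  assumes "repl V E x x'" and "repl V E y y'" and "\<not> repl V E x y"
  shows "E x y = E x' y'"
proof -
  have "\<not> repl V E y x'"
    using assms repl_sym repl_trans by blast
  then have "E y x' = E y' x'"
    using edge_repl_cong_left[OF assms(2)] by blast
  moreover have "E x y = E x' y"
    using edge_repl_cong_left[OF assms(1,3)] .
  ultimately show ?thesis using edge_sym by blast
qed

lemma repl_clique_eq:
  assumes "K \<in> repl_cliques V E" and "u \<in> K"
  shows "K = {x \<in> V. repl V E u x}"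
proof -
  obtain a where "a \<in> V" "K = {x \<in> V. repl V E a x}"
    using assms(1) unfolding repl_cliques_def by blast
  with assms(2) show ?thesis using repl_sym repl_trans by blast
qed

lemma repl_clique_mem_iff:
  assumes "K \<in> repl_cliques V E" and "u \<in> K"
  shows "x \<in> K \<longleftrightarrow> x \<in> V \<and> repl V E u x"
  using repl_clique_eq[OF assms] by blast

lemma repl_cliques_disjoint:
  "K \<in> repl_cliques V E \<Longrightarrow> K' \<in> repl_cliques V E \<Longrightarrow> K \<noteq> K' \<Longrightarrow> K \<inter> K' = {}"
proof -
  assume K: "K \<in> repl_cliques V E" and K': "K' \<in> repl_cliques V E" and "K \<noteq> K'"
  have False if "z \<in> K" "z \<in> K'" for z
    using repl_clique_eq[OF K that(1)] repl_clique_eq[OF K' that(2)] \<open>K \<noteq> K'\<close> by simp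
  then show ?thesis by blast
qed

lemma repl_clique_subset: "K \<in> repl_cliques V E \<Longrightarrow> K \<subseteq> V"
  unfolding repl_cliques_def by blast

lemma Union_repl_cliques: "\<Union>(repl_cliques V E) = V"
  unfolding repl_cliques_def repl_def by auto

lemma rep_in_repl_clique: "K \<in> repl_cliques V E \<Longrightarrow> rep K \<in> K"
  unfolding repl_cliques_def repl_def by (auto simp: some_in_eq)

lemma finite_repl_clique: "K \<in> repl_cliques V E \<Longrightarrow> finite K"
  using finite_V repl_clique_subset finite_subset by blast

lemma ordering_nth_clique:
  "repl_ordering V E Ks \<Longrightarrow> i < length Ks \<Longrightarrow> Ks ! i \<in> repl_cliques V E"
  unfolding repl_ordering_def by (metis nth_mem)

lemma ordering_nth_disjoint:
  assumes "repl_ordering V E Ks" "i < length Ks" "j < length Ks" "i \<noteq> j"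
  shows "Ks ! i \<inter> Ks ! j = {}"
  using assms ordering_nth_clique repl_cliques_disjoint nth_eq_iff_index_eq
  unfolding repl_ordering_def by metis

section \<open>Sorting the cliques by size minimises the bound\<close>

lemma card_nonneighbours_in_clique:
  assumes K: "K \<in> repl_cliques V E" and K': "K' \<in> repl_cliques V E"
    and "K \<noteq> K'" and v: "v \<in> K'"
  shows "card {z \<in> K. \<not> E v z} = (if E v (rep K) then 0 else card K)"
proof -
  have "E v z = E v (rep K)" if "z \<in> K" for z
  proof (rule edge_repl_cong)
    show "repl V E v v" unfolding repl_def by simp
    show "repl V E z (rep K)" "\<not> repl V E v z"
      using repl_clique_eq[OF K that] repl_clique_eq[OF K' v] rep_in_repl_clique[OF K]
        repl_cliques_disjoint[OF K K' \<open>K \<noteq> K'\<close>] v that by blast+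
  qed
  then have "{z \<in> K. \<not> E v z} = (if E v (rep K) then {} else K)"
    by auto
  then show ?thesis by simp
qed

lemma nonedges_before_eq_sum:
  assumes Ks: "repl_ordering V E Ks" and j: "j < length Ks"
  shows "nonedges_before E Ks j = (\<Sum>i<j. card {z \<in> Ks ! i. \<not> E (rep (Ks ! j)) z})"
proof -
  let ?v = "rep (Ks ! j)" and ?N = "\<lambda>i. {z \<in> Ks ! i. \<not> E (rep (Ks ! j)) z}"
  have v: "?v \<in> Ks ! j"
    using rep_in_repl_clique[OF ordering_nth_clique[OF Ks j]] .
  have "{z \<in> \<Union>(set (take j Ks)). z \<noteq> ?v \<and> \<not> E ?v z} = (\<Union>i<j. ?N i)"
  proof -
    have "z \<noteq> ?v" if "z \<in> Ks ! i" "i < j" for z i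
      using ordering_nth_disjoint[OF Ks, of i j] that j v by auto
    then show ?thesis
      unfolding Union_set_take[OF less_imp_le[OF j]] by blast
  qed
  moreover have "card (\<Union>i<j. ?N i) = (\<Sum>i<j. card (?N i))"
  proof (rule card_UN_disjoint)
    show "\<forall>i\<in>{..<j}. finite (?N i)"
      using j finite_repl_clique[OF ordering_nth_clique[OF Ks]] by auto
    show "\<forall>i\<in>{..<j}. \<forall>i'\<in>{..<j}. i \<noteq> i' \<longrightarrow> ?N i \<inter> ?N i' = {}"
    proof (intro ballI impI)
      fix i i' assume "i \<in> {..<j}" "i' \<in> {..<j}" "i \<noteq> i'"
      then have "Ks ! i \<inter> Ks ! i' = {}"
        using j by (intro ordering_nth_disjoint[OF Ks]) auto
      then show "?N i \<inter> ?N i' = {}" by blast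
    qed
  qed simp
  ultimately show ?thesis unfolding nonedges_before_def by simp
qed

lemma total_nonedges_eq_sum:
  assumes L: "repl_ordering V E L"
  shows "total_nonedges E L = (\<Sum>j<length L. \<Sum>i<j. cross_nonedges E (L ! i) (L ! j))"
proof -
  have "card {z \<in> L ! i. \<not> E (rep (L ! j)) z} = cross_nonedges E (L ! i) (L ! j)"
    if "i < j" "j < length L" for i j
  proof -
    have Ki: "L ! i \<in> repl_cliques V E" and Kj: "L ! j \<in> repl_cliques V E"
      using that ordering_nth_clique[OF L] by simp_all
    have "L ! i \<noteq> L ! j"
      using L that nth_eq_iff_index_eq unfolding repl_ordering_def by fastforce
    then show ?thesis
      unfolding cross_nonedges_def
      by (rule card_nonneighbours_in_clique[OF Ki Kj _ rep_in_repl_clique[OF Kj]])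
  qed
  then show ?thesis
    unfolding total_nonedges_def by (simp add: nonedges_before_eq_sum[OF L])
qed

lemma total_nonedges_sorted_le:
  assumes Ks: "repl_ordering V E Ks" and Ks': "repl_ordering V E Ks'"
    and sorted: "sorted (map card Ks')"
  shows "total_nonedges E Ks' \<le> total_nonedges E Ks"
proof -
  define mincost where
    "mincost A B = (if E (rep B) (rep A) then 0 else min (card A) (card B))" for A B
  define T where "T g L = (\<Sum>j<length L. \<Sum>i<j. g (L ! i) (L ! j))"
    for g :: "'a set \<Rightarrow> 'a set \<Rightarrow> nat" and L
  have "T mincost Ks \<le> T (cross_nonedges E) Ks"
    unfolding T_def mincost_def cross_nonedges_def by (intro sum_mono) auto
  moreover have "T (cross_nonedges E) Ks' = T mincost Ks'"
  proof -
    have "card (Ks' ! i) \<le> card (Ks' ! j)" if "i < j" "j < length Ks'" for i j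
      using sorted_nth_mono[OF sorted, of i j] that by simp
    then show ?thesis
      unfolding T_def mincost_def cross_nonedges_def by (intro sum.cong refl) (simp add: min_def)
  qed
  moreover have "T mincost Ks' = T mincost Ks"
  proof -
    \<comment> \<open>\<open>mincost\<close> is symmetric, so its sum over pairs does not depend on the ordering.\<close>
    have sym: "mincost A B = mincost B A" for A B
      unfolding mincost_def by (metis edge_sym min.commute)
    have "set Ks' = set Ks" "distinct Ks" "distinct Ks'"
      using Ks Ks' unfolding repl_ordering_def by simp_all
    then show ?thesis
      using sum_lower_triangle_sym[of Ks mincost, OF _ sym]
        sum_lower_triangle_sym[of Ks' mincost, OF _ sym]
      unfolding T_def by simp
  qed
  ultimately show ?thesis
    using total_nonedges_eq_sum[OF Ks] total_nonedges_eq_sum[OF Ks'] unfolding T_def by simp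
qed

section \<open>Rainbow induced copies in the blow-up\<close>

lemma blowup_edge_over_replicas:
  assumes p: "repl V E x (fst p)" and q: "repl V E y (fst q)" and eq: "p = q \<longleftrightarrow> x = y"
  shows "blowup_edge E p q \<longleftrightarrow> E x y"
proof (cases "repl V E x y")
  case True
  show ?thesis
  proof (cases "x = y")
    case True
    with eq edge_irrefl show ?thesis unfolding blowup_edge_def by simp
  next
    case False
    have "repl V E (fst p) (fst q)"
      using p q True repl_sym repl_trans by blast
    then have "E (fst p) (fst q)" if "fst p \<noteq> fst q"
      using that repl_edge by blast
    moreover have "snd p \<noteq> snd q" if "fst p = fst q"
      using that eq False prod_eqI by blast
    ultimately show ?thesis
      using repl_edge[OF True False] unfolding blowup_edge_def by blast
  qed
next
  case False
  have "fst p \<noteq> fst q"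
    using p q False repl_sym repl_trans by metis
  moreover have "E x y = E (fst p) (fst q)"
    using edge_repl_cong[OF p q False] .
  ultimately show ?thesis unfolding blowup_edge_def by simp
qed

lemma inj_on_blowup_clique:
  assumes c: "proper_coloring (blowup V w) (blowup_edge E) c" and K: "K \<in> repl_cliques V E"
  shows "inj_on c (blowup K w)"
proof (rule proper_coloring_inj_on_clique[OF c blowup_mono[OF repl_clique_subset[OF K]]])
  fix p q assume pq: "p \<in> blowup K w" "q \<in> blowup K w" "p \<noteq> q"
  show "blowup_edge E p q"
  proof (cases "fst p = fst q")
    case True
    with pq(3) show ?thesis by (simp add: blowup_edge_def prod_eq_iff)
  next
    case False
    have "fst p \<in> K" "fst q \<in> K"
      using pq(1,2) unfolding blowup_def by auto
    with False show ?thesis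
      using repl_clique_eq[OF K] repl_edge unfolding blowup_edge_def by blast
  qed
qed

lemma ex_rainbow_embedding_of_clique:
  assumes c: "proper_coloring (blowup V w) (blowup_edge E) c" and K: "K \<in> repl_cliques V E"
    and F: "finite F" and card: "card K + card F \<le> (\<Sum>u\<in>K. w u)"
  obtains g where "inj_on (c \<circ> g) K"
    and "\<And>x. x \<in> K \<Longrightarrow> g x \<in> blowup V w \<and> repl V E x (fst (g x)) \<and> c (g x) \<notin> F"
proof -
  have fin: "finite K"
    by (rule finite_repl_clique[OF K])
  have "card K + card F \<le> card (blowup K w)"
    using card card_blowup[OF fin] by simp
  then obtain g where g: "inj_on g K" "g ` K \<subseteq> {p \<in> blowup K w. c p \<notin> F}"
    using card_le_inj_avoiding[OF finite_blowup[OF fin] inj_on_blowup_clique[OF c K] fin F]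
    by blast
  have "inj_on (c \<circ> g) K"
  proof (rule comp_inj_on[OF g(1)])
    show "inj_on c (g ` K)"
      using g(2) by (intro inj_on_subset[OF inj_on_blowup_clique[OF c K]]) blast
  qed
  moreover have "g x \<in> blowup V w \<and> repl V E x (fst (g x)) \<and> c (g x) \<notin> F" if "x \<in> K" for x
  proof -
    have "g x \<in> blowup K w" "c (g x) \<notin> F"
      using g(2) that by blast+
    moreover from this(1) have "g x \<in> blowup V w" "fst (g x) \<in> K"
      using repl_clique_subset[OF K] unfolding blowup_def by auto
    ultimately show ?thesis
      using repl_clique_mem_iff[OF K that] by blast
  qed
  ultimately show ?thesis
    using that by blast
qed

lemma rainbow_extend_to_clique:
  assumes c: "proper_coloring (blowup V w) (blowup_edge E) c"
    and K: "K \<in> repl_cliques V E" and U: "U \<subseteq> V" "U \<inter> K = {}"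
    and weight: "card K + card {z \<in> U. z \<noteq> rep K \<and> \<not> E (rep K) z} \<le> (\<Sum>u\<in>K. w u)"
    and f: "\<And>x. x \<in> U \<Longrightarrow> f x \<in> blowup V w \<and> repl V E x (fst (f x))"
    and inj: "inj_on (c \<circ> f) U"
  obtains g where "\<And>x. x \<in> U \<union> K \<Longrightarrow> g x \<in> blowup V w \<and> repl V E x (fst (g x))"
    and "inj_on (c \<circ> g) (U \<union> K)"
proof -
  let ?v = "rep K"
  define N where "N = {z \<in> U. z \<noteq> ?v \<and> \<not> E ?v z}"
  have "finite N"
    using finite_subset[OF U(1) finite_V] unfolding N_def by simp
  then have "finite ((c \<circ> f) ` N)" "card K + card ((c \<circ> f) ` N) \<le> (\<Sum>u\<in>K. w u)"
    using weight card_image_le[of N "c \<circ> f"] unfolding N_def by simp_all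
  then obtain g0 where g0_inj: "inj_on (c \<circ> g0) K"
    and g0: "\<And>x. x \<in> K \<Longrightarrow> g0 x \<in> blowup V w \<and> repl V E x (fst (g0 x)) \<and> c (g0 x) \<notin> (c \<circ> f) ` N"
    using ex_rainbow_embedding_of_clique[OF c K] by blast
  have v: "?v \<in> K"
    by (rule rep_in_repl_clique[OF K])
  have colours_differ: "c (f z) \<noteq> c (g0 x)" if z: "z \<in> U" and x: "x \<in> K" for z x
  proof (cases "z \<in> N")
    case True
    then show ?thesis
      using g0[OF x] by (metis comp_apply imageI)
  next
    case False
    have "z \<notin> K"
      using U(2) z by blast
    then have "E ?v z" and not_repl: "\<not> repl V E ?v z"
      using False z v repl_clique_mem_iff[OF K v] U(1) unfolding N_def by blast+
    have "repl V E ?v (fst (g0 x))"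
      using g0[OF x] repl_clique_mem_iff[OF K v] x repl_trans by blast
    then have "E ?v z = E (fst (g0 x)) (fst (f z))"
      by (rule edge_repl_cong[OF _ conjunct2[OF f[OF z]] not_repl])
    then have "blowup_edge E (g0 x) (f z)"
      using \<open>E ?v z\<close> unfolding blowup_edge_def by simp
    with c f[OF z] g0[OF x] have "c (g0 x) \<noteq> c (f z)"
      unfolding proper_coloring_def by blast
    then show ?thesis by simp
  qed
  define g where "g x = (if x \<in> K then g0 x else f x)" for x
  have "inj_on (c \<circ> g) U = inj_on (c \<circ> f) U"
    using U(2) by (intro inj_on_cong) (auto simp: g_def)
  moreover have "inj_on (c \<circ> g) K = inj_on (c \<circ> g0) K"
    by (intro inj_on_cong) (simp add: g_def)
  moreover have "(c \<circ> g) ` (U - K) \<inter> (c \<circ> g) ` (K - U) = {}"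
    using colours_differ unfolding g_def by fastforce
  ultimately have "inj_on (c \<circ> g) (U \<union> K)"
    using inj g0_inj by (simp add: inj_on_Un)
  moreover have "g x \<in> blowup V w \<and> repl V E x (fst (g x))" if "x \<in> U \<union> K" for x
    using that f g0 by (cases "x \<in> K") (simp_all add: g_def)
  ultimately show ?thesis
    using that by blast
qed

lemma rainbow_prefix_embedding:
  assumes Ks: "repl_ordering V E Ks"
    and w: "admissible_weight E Ks w"
    and c: "proper_coloring (blowup V w) (blowup_edge E) c"
    and k: "k \<le> length Ks"
  shows "\<exists>f. (\<forall>x\<in>\<Union>(set (take k Ks)). f x \<in> blowup V w \<and> repl V E x (fst (f x)))
           \<and> inj_on (c \<circ> f) (\<Union>(set (take k Ks)))"
  using k
proof (induction k)
  case 0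
  show ?case by simp
next
  case (Suc k)
  then have k: "k < length Ks" by simp
  let ?U = "\<Union>(set (take k Ks))" and ?K = "Ks ! k"
  obtain f where f: "\<And>x. x \<in> ?U \<Longrightarrow> f x \<in> blowup V w \<and> repl V E x (fst (f x))"
    and inj: "inj_on (c \<circ> f) ?U"
    using Suc.IH[OF less_imp_le[OF k]] by blast
  have "Ks ! j \<subseteq> V" "Ks ! j \<inter> ?K = {}" if "j < k" for j
    using that k repl_clique_subset[OF ordering_nth_clique[OF Ks]] ordering_nth_disjoint[OF Ks, of j k]
    by simp_all
  then have U: "?U \<subseteq> V" "?U \<inter> ?K = {}"
    unfolding Union_set_take[OF less_imp_le[OF k]] by blast+
  obtain g where "\<And>x. x \<in> ?U \<union> ?K \<Longrightarrow> g x \<in> blowup V w \<and> repl V E x (fst (g x))"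
    and "inj_on (c \<circ> g) (?U \<union> ?K)"
    using rainbow_extend_to_clique[OF c ordering_nth_clique[OF Ks k] U _ f inj] w k
    unfolding admissible_weight_def nonedges_before_def by blast
  moreover have "\<Union>(set (take (Suc k) Ks)) = ?U \<union> ?K"
    by (simp add: take_Suc_conv_app_nth[OF k] Un_commute)
  ultimately show ?case by metis
qed

lemma rainbow_copy_in_blowup:
  assumes Ks: "repl_ordering V E Ks"
    and w: "admissible_weight E Ks w"
    and c: "proper_coloring (blowup V w) (blowup_edge E) c"
  shows "has_rainbow_induced_copy V E (blowup V w) (blowup_edge E) c"
proof -
  have "\<Union>(set (take (length Ks) Ks)) = V"
    using Ks Union_repl_cliques unfolding repl_ordering_def by simp
  then obtain f where f: "\<And>x. x \<in> V \<Longrightarrow> f x \<in> blowup V w \<and> repl V E x (fst (f x))"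
    and rainbow: "inj_on (c \<circ> f) V"
    using rainbow_prefix_embedding[OF Ks w c, of "length Ks"] by auto
  have inj: "inj_on f V"
    using rainbow by (rule inj_on_imageI2)
  have "blowup_edge E (f x) (f y) \<longleftrightarrow> E x y" if "x \<in> V" "y \<in> V" for x y
    using that f inj by (intro blowup_edge_over_replicas) (auto simp: inj_on_eq_iff)
  then show ?thesis
    unfolding has_rainbow_induced_copy_def using f inj rainbow by blast
qed

lemma ex_admissible_weight:
  assumes Ks: "repl_ordering V E Ks"
  obtains w where "admissible_weight E Ks w" and "(\<Sum>v\<in>V. w v) = card V + total_nonedges E Ks"
proof
  let ?extra = "\<lambda>v. \<Sum>k<length Ks. if v = rep (Ks ! k) then nonedges_before E Ks k else 0"
  define w where "w v = Suc (?extra v)" for v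
  have rep: "rep (Ks ! k) \<in> Ks ! k" "rep (Ks ! k) \<in> V" if "k < length Ks" for k
    using rep_in_repl_clique[OF ordering_nth_clique[OF Ks that]]
      repl_clique_subset[OF ordering_nth_clique[OF Ks that]] by auto
  have "card (Ks ! k) + nonedges_before E Ks k \<le> (\<Sum>u\<in>Ks ! k. w u)" if k: "k < length Ks" for k
  proof -
    have "(if rep (Ks ! k) = rep (Ks ! k) then nonedges_before E Ks k else 0)
        \<le> ?extra (rep (Ks ! k))"
      using k by (intro member_le_sum) auto
    also have "\<dots> \<le> (\<Sum>u\<in>Ks ! k. ?extra u)"
      using rep(1)[OF k] finite_repl_clique[OF ordering_nth_clique[OF Ks k]]
      by (intro member_le_sum) auto
    finally show ?thesis
      unfolding w_def by (simp add: sum_Suc)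
  qed
  then show "admissible_weight E Ks w"
    unfolding admissible_weight_def by blast
  have "(\<Sum>v\<in>V. ?extra v)
      = (\<Sum>k<length Ks. \<Sum>v\<in>V. if v = rep (Ks ! k) then nonedges_before E Ks k else 0)"
    by (rule sum.swap)
  also have "\<dots> = total_nonedges E Ks"
    unfolding total_nonedges_def using rep(2) finite_V by (intro sum.cong refl) simp
  finally show "(\<Sum>v\<in>V. w v) = card V + total_nonedges E Ks"
    unfolding w_def by (simp add: sum_Suc)
qed

lemma rho_le_card_plus_total_nonedges:
  assumes Ks: "repl_ordering V E Ks"
  shows "rho V E \<le> card V + total_nonedges E Ks"
proof -
  obtain w where w: "admissible_weight E Ks w"
    and size: "(\<Sum>v\<in>V. w v) = card V + total_nonedges E Ks"
    using ex_admissible_weight[OF Ks] by blast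
  have "rho V E \<le> card (blowup V w)"
  proof (rule rho_le_card)
    show "finite (blowup V w)"
      using finite_V by (rule finite_blowup)
    show "blowup_edge E q p" if "blowup_edge E p q" for p q
      using that edge_sym unfolding blowup_edge_def by metis
    show "\<not> blowup_edge E p p" for p
      using edge_irrefl unfolding blowup_edge_def by simp
  qed (rule rainbow_copy_in_blowup[OF Ks w])
  then show ?thesis
    using size card_blowup[OF finite_V] by simp
qed

end

theorem theorem3p1:
  fixes V :: "'a set" and E :: "'a \<Rightarrow> 'a \<Rightarrow> bool" and Ks :: "'a set list"
  assumes "simple_graph V E"
    and "repl_ordering V E Ks"
  shows "rho V E \<le> card V + total_nonedges E Ks
    \<and> (\<forall>Ks'. repl_ordering V E Ks' \<and> sorted (map card Ks')
           \<longrightarrow> total_nonedges E Ks' \<le> total_nonedges E Ks)"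
proof -
  interpret sgraph V E
    using assms(1) by (rule sgraph.intro)
  show ?thesis
    using rho_le_card_plus_total_nonedges total_nonedges_sorted_le assms(2) by blast
qed

end
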